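(* Let $\{x_k\}$ be generated by the Subgradient-InexP method with Polyak's stepsize rule, under the standing assumptions, and assume $\{x_k\}$ converges to a point $x_*\in\Omega^*$. Let $c>0$ satisfy $c\ge\|s_k\|$ for all $k=0,1,\dots$. Then for every $N\in\mathbb{N}$, $$\min\{f(x_k)-f^*:\ k=0,1,\dots,N\}\le\frac{c}{\sqrt{\underline\beta(N+1)}}\,\|x_0-x_*\|.$$
   Context: Problem: minimize a convex $f:\mathbb{R}^n\to\mathbb{R}$ over a nonempty closed convex $C\subset\mathbb{R}^n$; $f^*:=\inf_{x\in C}f(x)$, $\Omega^*$ the set of minimizers. For $\epsilon\ge0$, $\partial_\epsilon f(x):=\{s: f(y)\ge f(x)+\langle s,y-x\rangle-\epsilon\ \forall y\}$. Relative error tolerance function: any $\varphi_{\gamma,\theta,\lambda}:(\mathbb{R}^n)^3\to[0,\infty)$ with $\varphi_{\gamma,\theta,\lambda}(u,v,w)\le\gamma\|v-u\|^2+\theta\|w-v\|^2+\lambda\|w-u\|^2$; for $u\in C$, $\mathcal{P}_C(\varphi_{\gamma,\theta,\lambda},u,v):=\{w\in C:\langle v-w,z-w\rangle\le\varphi_{\gamma,\theta,\lambda}(u,v,w)\ \forall z\in C\}$. Subgradient-InexP method: $x_0\in C$; at iteration $k$, if $0\in\partial f(x_k)$ stop; otherwise choose nonzero $s_k\in\partial_{\epsilon_k}f(x_k)$, stepsize $t_k>0$, and $x_{k+1}\in\mathcal{P}_C(\varphi_{\gamma_k,\theta_k,\lambda_k},x_k,x_k-t_ks_k)$. Standing assumptions: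 $\gamma_k\in[0,\bar\gamma)$, $\theta_k\in[0,\bar\theta)$, $\lambda_k\in[0,\bar\lambda)$ with $\bar\gamma\ge0$, $\bar\theta,\bar\lambda\in[0,1/2)$; the sequence is infinite. Let $\nu:=\frac{1+2\bar\gamma}{1-2\bar\lambda}$. Polyak's stepsize rule: $\Omega^*\neq\varnothing$, $f^*>-\infty$ known; $\mu\ge0$, $\underline\beta>0$, $\bar\beta>0$; $\{\epsilon_k\}$ nonincreasing, $0<\underline\beta\le\beta_k\le\bar\beta<\frac{1}{2\mu+\nu}$ and $0<\epsilon_k\le\mu\beta_k[f(x_k)-f^*]$ for all $k$; $t_k:=\beta_k\frac{f(x_k)-f^*}{\|s_k\|^2}$. *)

theory Defs
  imports "HOL-Analysis.Analysis"
begin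

definition eps_subdiff :: "('a::real_inner \<Rightarrow> real) \<Rightarrow> real \<Rightarrow> 'a \<Rightarrow> 'a set" where
  "eps_subdiff f eps x = {s. \<forall>y. f y \<ge> f x + inner s (y - x) - eps}"

definition rel_err_tol :: "('a::real_normed_vector \<Rightarrow> 'a \<Rightarrow> 'a \<Rightarrow> real) \<Rightarrow> real \<Rightarrow> real \<Rightarrow> real \<Rightarrow> bool" where
  "rel_err_tol phi gam th lam \<longleftrightarrow>
     (\<forall>u v w. 0 \<le> phi u v w \<and>
        phi u v w \<le> gam * (norm (v - u))\<^sup>2 + th * (norm (w - v))\<^sup>2 + lam * (norm (w - u))\<^sup>2)"

definition inexact_proj :: "'a::real_inner set \<Rightarrow> ('a \<Rightarrow> 'a \<Rightarrow> 'a \<Rightarrow> real) \<Rightarrow> 'a \<Rightarrow> 'a \<Rightarrow> 'a set" where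
  "inexact_proj C phi u v = {w \<in> C. \<forall>z\<in>C. inner (v - w) (z - w) \<le> phi u v w}"

definition minimizers :: "('a \<Rightarrow> real) \<Rightarrow> 'a set \<Rightarrow> 'a set" where
  "minimizers f C = {x \<in> C. \<forall>y\<in>C. f x \<le> f y}"

end

theory Submission
  imports Defs
begin

text \<open>Each iteration decreases the squared distance to the solution \<open>x\<^sub>*\<close> by at least
  \<open>\<beta>\<^sub>k (f(x\<^sub>k) - f\<^sup>*)\<^sup>2 / \<parallel>s\<^sub>k\<parallel>\<^sup>2 \<ge> \<underline>\<beta> (f(x\<^sub>k) - f\<^sup>*)\<^sup>2 / c\<^sup>2\<close>: the inexact projection is
  nonexpansive up to the error terms, which the relative tolerance lets us absorb into the
  factor \<open>\<nu>\<close>, and Polyak's stepsize with \<open>\<beta>\<^sub>k (2\<mu> + \<nu>) < 1\<close> leaves a net decrease.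
  Summing over \<open>k = 0..N\<close> bounds \<open>\<underline>\<beta>/c\<^sup>2 \<Sum> (f(x\<^sub>k) - f\<^sup>*)\<^sup>2\<close> by \<open>\<parallel>x\<^sub>0 - x\<^sub>*\<parallel>\<^sup>2\<close>, and the
  smallest term of the sum is at most its average.\<close>

lemma norm_diff_sq_three_point:
  fixes v w z :: "'a::real_inner"
  shows "(norm (w - z))\<^sup>2 = (norm (v - z))\<^sup>2 - (norm (v - w))\<^sup>2 + 2 * inner (v - w) (z - w)"
  unfolding power2_norm_eq_inner
  by (simp add: inner_commute algebra_simps)

lemma inexact_proj_dist_le:
  fixes u v w z :: "'a::real_inner"
  assumes w: "w \<in> inexact_proj C phi u v" and tol: "rel_err_tol phi g th l"
    and th: "th \<le> 1/2" and z: "z \<in> C"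
  shows "(norm (w - z))\<^sup>2 \<le> (norm (v - z))\<^sup>2 + 2 * g * (norm (v - u))\<^sup>2 + 2 * l * (norm (w - u))\<^sup>2"
proof -
  have "inner (v - w) (z - w) \<le> phi u v w"
    using w z by (auto simp: inexact_proj_def)
  also have "\<dots> \<le> g * (norm (v - u))\<^sup>2 + th * (norm (v - w))\<^sup>2 + l * (norm (w - u))\<^sup>2"
    using tol by (simp add: rel_err_tol_def norm_minus_commute)
  finally have "inner (v - w) (z - w) \<le> \<dots>" .
  moreover have "th * (norm (v - w))\<^sup>2 \<le> (1/2) * (norm (v - w))\<^sup>2"
    using th by (intro mult_right_mono) auto
  ultimately show ?thesis
    using norm_diff_sq_three_point[of w z v] by linarith
qed

text \<open>Taking \<open>z = u\<close> in the previous lemma controls \<open>\<parallel>w - u\<parallel>\<close> by \<open>\<parallel>v - u\<parallel>\<close>, which removes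
  the implicit dependence on \<open>w\<close> from the error terms.\<close>

lemma inexact_proj_fejer:
  fixes u v w z :: "'a::real_inner"
  assumes w: "w \<in> inexact_proj C phi u v" and tol: "rel_err_tol phi g th l"
    and g: "0 \<le> g" and l: "0 \<le> l" "l < 1/2" and th: "th \<le> 1/2"
    and u: "u \<in> C" and z: "z \<in> C"
  shows "(norm (w - z))\<^sup>2 \<le> (norm (v - z))\<^sup>2 + ((1 + 2*g) / (1 - 2*l) - 1) * (norm (v - u))\<^sup>2"
proof -
  define P where "P = (norm (v - u))\<^sup>2"
  define Q where "Q = (norm (w - u))\<^sup>2"
  define \<nu> where "\<nu> = (1 + 2*g) / (1 - 2*l)"
  have "Q \<le> P + 2 * g * P + 2 * l * Q"
    using inexact_proj_dist_le[OF w tol th u] by (simp add: P_def Q_def)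
  then have Q: "Q \<le> \<nu> * P"
    using l by (simp add: \<nu>_def field_simps)
  have "(norm (w - z))\<^sup>2 \<le> (norm (v - z))\<^sup>2 + 2 * g * P + 2 * l * Q"
    using inexact_proj_dist_le[OF w tol th z] by (simp add: P_def Q_def)
  also have "\<dots> \<le> (norm (v - z))\<^sup>2 + 2 * g * P + 2 * l * (\<nu> * P)"
    using Q l by (simp add: mult_left_mono)
  also have "\<dots> = (norm (v - z))\<^sup>2 + (2 * g + 2 * l * \<nu>) * P"
    by (simp add: algebra_simps)
  also have "2 * g + 2 * l * \<nu> = \<nu> - 1"
    using l by (simp add: \<nu>_def field_simps)
  finally show ?thesis by (simp add: P_def \<nu>_def)
qed

lemma eps_subdiff_step_dist:
  fixes u s z :: "'a::real_inner"
  assumes s: "s \<in> eps_subdiff f \<epsilon> u" and t: "0 \<le> t"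
  shows "(norm (u - t *\<^sub>R s - z))\<^sup>2 \<le> (norm (u - z))\<^sup>2 - 2 * t * (f u - f z - \<epsilon>) + t\<^sup>2 * (norm s)\<^sup>2"
proof -
  have "f z \<ge> f u + inner s (z - u) - \<epsilon>"
    using s unfolding eps_subdiff_def by blast
  then have "f u - f z - \<epsilon> \<le> inner s (u - z)"
    by (simp add: inner_diff_right)
  then have "2 * t * (f u - f z - \<epsilon>) \<le> 2 * t * inner s (u - z)"
    using t by (intro mult_left_mono) auto
  moreover have "(norm (u - t *\<^sub>R s - z))\<^sup>2 = (norm (u - z))\<^sup>2 - 2 * t * inner s (u - z) + t\<^sup>2 * (norm s)\<^sup>2"
    unfolding power2_norm_eq_inner
    by (simp add: inner_commute algebra_simps power2_eq_square)
  ultimately show ?thesis by linarith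
qed

text \<open>With \<open>t = \<beta> d / S\<close> one has \<open>\<nu> t\<^sup>2 S = \<nu> \<beta> t d\<close>, so the left-hand side is at most
  \<open>-t d (2 - 2\<mu>\<beta> - \<nu>\<beta>) \<le> -t d\<close>.\<close>

lemma polyak_step_arith:
  fixes d \<epsilon> \<beta> \<mu> \<nu> S t :: real
  assumes d: "0 \<le> d" and S: "0 < S" and \<beta>: "0 \<le> \<beta>" and \<epsilon>: "\<epsilon> \<le> \<mu> * \<beta> * d"
    and \<beta>_small: "\<beta> * (2 * \<mu> + \<nu>) \<le> 1" and t: "t = \<beta> * d / S"
  shows "- 2 * t * (d - \<epsilon>) + \<nu> * t\<^sup>2 * S \<le> - \<beta> * d\<^sup>2 / S"
proof -
  have t_nn: "0 \<le> t" using t d S \<beta> by simp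
  have tS: "t * S = \<beta> * d" using t S by simp
  have "t * \<epsilon> \<le> t * (\<mu> * \<beta> * d)" using \<epsilon> t_nn by (intro mult_left_mono)
  moreover have "\<nu> * t\<^sup>2 * S = \<nu> * \<beta> * (t * d)"
    using tS by (simp add: power2_eq_square algebra_simps)
  ultimately have "- 2 * t * (d - \<epsilon>) + \<nu> * t\<^sup>2 * S \<le> - (t * d) * (2 - 2 * \<mu> * \<beta> - \<nu> * \<beta>)"
    by (simp only: algebra_simps)
  also have "\<dots> \<le> - (t * d)"
  proof -
    have "0 \<le> (t * d) * (1 - \<beta> * (2 * \<mu> + \<nu>))"
      using \<beta>_small t_nn d by simp
    then show ?thesis by (simp add: algebra_simps)
  qed
  also have "t * d = \<beta> * d\<^sup>2 / S" using t by (simp add: power2_eq_square)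
  finally show ?thesis by simp
qed

lemma polyak_inexact_proj_step:
  fixes u w s z :: "'a::real_inner"
  assumes w: "w \<in> inexact_proj C phi u (u - t *\<^sub>R s)" and tol: "rel_err_tol phi g th l"
    and g: "0 \<le> g" and l: "0 \<le> l" "l < 1/2" and th: "th \<le> 1/2"
    and \<nu>: "(1 + 2*g) / (1 - 2*l) \<le> \<nu>"
    and u: "u \<in> C" and z: "z \<in> C" and fz: "f z \<le> f u"
    and s: "s \<in> eps_subdiff f \<epsilon> u" "s \<noteq> 0"
    and \<beta>: "0 \<le> \<beta>" "\<beta> * (2 * \<mu> + \<nu>) \<le> 1" and \<epsilon>: "\<epsilon> \<le> \<mu> * \<beta> * (f u - f z)"
    and t: "t = \<beta> * (f u - f z) / (norm s)\<^sup>2"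
  shows "(norm (w - z))\<^sup>2 \<le> (norm (u - z))\<^sup>2 - \<beta> * (f u - f z)\<^sup>2 / (norm s)\<^sup>2"
proof -
  have S: "0 < (norm s)\<^sup>2" using s by simp
  have t_nn: "0 \<le> t" using t \<beta> fz by simp
  have "(norm (w - z))\<^sup>2 \<le> (norm (u - t *\<^sub>R s - z))\<^sup>2 + ((1 + 2*g) / (1 - 2*l) - 1) * (t\<^sup>2 * (norm s)\<^sup>2)"
    using inexact_proj_fejer[OF w tol g l th u z] by (simp add: power_mult_distrib)
  also have "\<dots> \<le> (norm (u - t *\<^sub>R s - z))\<^sup>2 + (\<nu> - 1) * (t\<^sup>2 * (norm s)\<^sup>2)"
    using \<nu> by (intro add_left_mono mult_right_mono) auto
  also have "\<dots> \<le> (norm (u - z))\<^sup>2 + (- 2 * t * (f u - f z - \<epsilon>) + \<nu> * t\<^sup>2 * (norm s)\<^sup>2)"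
    using eps_subdiff_step_dist[OF s(1) t_nn, of z] by (simp add: algebra_simps)
  also have "\<dots> \<le> (norm (u - z))\<^sup>2 - \<beta> * (f u - f z)\<^sup>2 / (norm s)\<^sup>2"
    using polyak_step_arith[OF _ S \<beta>(1) \<epsilon> \<beta>(2) t] fz by simp
  finally show ?thesis .
qed

lemma sum_le_of_decrease:
  fixes r b :: "nat \<Rightarrow> 'a::linordered_ab_group_add"
  assumes "\<And>k. r (Suc k) \<le> r k - b k"
  shows "(\<Sum>k\<in>{0..N}. b k) \<le> r 0 - r (Suc N)"
proof (induction N)
  case 0
  show ?case using assms[of 0] by (simp add: le_diff_eq add.commute)
next
  case (Suc N)
  have "(\<Sum>k\<in>{0..Suc N}. b k) = (\<Sum>k\<in>{0..N}. b k) + b (Suc N)" by simp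
  also have "\<dots> \<le> (r 0 - r (Suc N)) + (r (Suc N) - r (Suc (Suc N)))"
    using Suc.IH assms[of "Suc N"] by (intro add_mono) (simp_all add: le_diff_eq add.commute)
  finally show ?case by simp
qed

lemma Min_le_of_sum_sq_le:
  fixes e :: "nat \<Rightarrow> real"
  assumes e: "\<And>k. 0 \<le> e k" and a: "0 < a" and B: "0 \<le> B"
    and sum: "a * (\<Sum>k\<in>{0..N}. (e k)\<^sup>2) \<le> B\<^sup>2"
  shows "Min (e ` {0..N}) \<le> B / sqrt (a * (real N + 1))"
proof -
  define m where "m = Min (e ` {0..N})"
  have m_nn: "0 \<le> m"
    using Min_in[of "e ` {0..N}"] e by (auto simp: m_def)
  have "(real N + 1) * m\<^sup>2 = (\<Sum>k\<in>{0..N}. m\<^sup>2)" by simp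
  also have "\<dots> \<le> (\<Sum>k\<in>{0..N}. (e k)\<^sup>2)"
    using m_nn by (intro sum_mono power_mono) (auto simp: m_def)
  finally have "a * ((real N + 1) * m\<^sup>2) \<le> a * (\<Sum>k\<in>{0..N}. (e k)\<^sup>2)"
    using a by (intro mult_left_mono) auto
  then have "(a * (real N + 1)) * m\<^sup>2 \<le> B\<^sup>2"
    using sum by (simp add: mult.assoc)
  then have "m\<^sup>2 \<le> B\<^sup>2 / (a * (real N + 1))"
    using a by (simp add: pos_le_divide_eq mult.commute)
  then have "m \<le> sqrt (B\<^sup>2 / (a * (real N + 1)))"
    using real_le_rsqrt by blast
  also have "\<dots> = B / sqrt (a * (real N + 1))"
    using B by (simp add: real_sqrt_divide)
  finally show ?thesis unfolding m_def .
qed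

theorem mainTheorem9:
  fixes f :: "'a::euclidean_space \<Rightarrow> real"
    and C :: "'a set"
    and x s :: "nat \<Rightarrow> 'a"
    and t eps beta gam th lam :: "nat \<Rightarrow> real"
    and phi :: "nat \<Rightarrow> 'a \<Rightarrow> 'a \<Rightarrow> 'a \<Rightarrow> real"
    and gbar thbar lbar mu blow bup fstar c :: real
    and xstar :: 'a
  assumes f_convex: "convex_on UNIV f"
    and C_closed: "closed C" and C_convex: "convex C" and C_ne: "C \<noteq> {}"
    \<comment> \<open>Subgradient-InexP method, infinite sequence\<close>
    and x0: "x 0 \<in> C"
    and no_stop: "\<And>k. 0 \<notin> eps_subdiff f 0 (x k)"
    and s_sub: "\<And>k. s k \<in> eps_subdiff f (eps k) (x k)"
    and s_nz: "\<And>k. s k \<noteq> 0"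
    and t_pos: "\<And>k. t k > 0"
    and x_step: "\<And>k. x (Suc k) \<in> inexact_proj C (phi k) (x k) (x k - t k *\<^sub>R s k)"
    and phi_tol: "\<And>k. rel_err_tol (phi k) (gam k) (th k) (lam k)"
    \<comment> \<open>standing assumptions on the tolerance parameters\<close>
    and gam_bd: "\<And>k. 0 \<le> gam k \<and> gam k < gbar"
    and th_bd: "\<And>k. 0 \<le> th k \<and> th k < thbar"
    and lam_bd: "\<And>k. 0 \<le> lam k \<and> lam k < lbar"
    and gbar_nn: "0 \<le> gbar"
    and thbar_bd: "0 \<le> thbar \<and> thbar < 1/2"
    and lbar_bd: "0 \<le> lbar \<and> lbar < 1/2"
    \<comment> \<open>Polyak's stepsize rule\<close>
    and Omega_ne: "minimizers f C \<noteq> {}"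
    and fstar_def: "fstar = (INF y\<in>C. f y)"
    and mu_nn: "0 \<le> mu"
    and blow_pos: "0 < blow" and bup_pos: "0 < bup"
    and eps_noninc: "\<And>k. eps (Suc k) \<le> eps k"
    and beta_bd: "\<And>k. blow \<le> beta k \<and> beta k \<le> bup"
    and bup_lt: "bup < 1 / (2 * mu + (1 + 2 * gbar) / (1 - 2 * lbar))"
    and eps_bd: "\<And>k. 0 < eps k \<and> eps k \<le> mu * beta k * (f (x k) - fstar)"
    and t_def: "\<And>k. t k = beta k * (f (x k) - fstar) / (norm (s k))\<^sup>2"
    \<comment> \<open>convergence to a solution, bounded subgradients\<close>
    and xstar_sol: "xstar \<in> minimizers f C"
    and x_conv: "x \<longlonglongrightarrow> xstar"
    and c_pos: "0 < c"
    and s_bd: "\<And>k. norm (s k) \<le> c"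
  shows "\<forall>N::nat. Min ((\<lambda>k. f (x k) - fstar) ` {0..N})
           \<le> c / sqrt (blow * (real N + 1)) * norm (x 0 - xstar)"
proof
  fix N :: nat
  define \<nu> where "\<nu> = (1 + 2 * gbar) / (1 - 2 * lbar)"
  define e where "e k = f (x k) - fstar" for k
  have xC: "x k \<in> C" for k
    using x0 x_step[of "k - 1"] by (cases k) (auto simp: inexact_proj_def)
  have xstar_C: "xstar \<in> C" and xstar_min: "\<And>y. y \<in> C \<Longrightarrow> f xstar \<le> f y"
    using xstar_sol by (auto simp: minimizers_def)
  have fstar: "fstar = f xstar"
    unfolding fstar_def using xstar_C xstar_min by (intro cInf_eq_minimum) auto
  have e_nn: "0 \<le> e k" for k
    using xstar_min[OF xC[of k]] by (simp add: e_def fstar)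
  have "0 < 2 * mu + \<nu>"
    using mu_nn gbar_nn lbar_bd by (simp add: \<nu>_def add_nonneg_pos)
  then have "bup * (2 * mu + \<nu>) < 1"
    using bup_lt[folded \<nu>_def] by (simp add: less_divide_eq)
  then have "beta k * (2 * mu + \<nu>) \<le> 1" for k
    using beta_bd[of k] \<open>0 < 2 * mu + \<nu>\<close>
    by (meson less_le_trans mult_right_mono nless_le not_le)
  moreover have "(1 + 2 * gam k) / (1 - 2 * lam k) \<le> \<nu>" for k
    using gam_bd[of k] lam_bd[of k] lbar_bd unfolding \<nu>_def by (intro frac_le) auto
  ultimately have dec: "(norm (x (Suc k) - xstar))\<^sup>2 \<le> (norm (x k - xstar))\<^sup>2 - beta k * (e k)\<^sup>2 / (norm (s k))\<^sup>2" for k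
    using gam_bd[of k] lam_bd[of k] th_bd[of k] thbar_bd lbar_bd beta_bd[of k] blow_pos
      e_nn[of k] eps_bd[of k] t_def[of k] s_sub[of k] s_nz[of k]
    unfolding e_def fstar
    by (intro polyak_inexact_proj_step[OF x_step phi_tol, where \<nu> = \<nu>, OF _ _ _ _ _ xC xstar_C]) auto
  have "blow * (e k)\<^sup>2 / c\<^sup>2 \<le> beta k * (e k)\<^sup>2 / (norm (s k))\<^sup>2" for k
    using beta_bd[of k] blow_pos s_nz[of k] s_bd[of k]
    by (intro frac_le mult_right_mono power_mono) auto
  then have "(\<Sum>k\<in>{0..N}. blow * (e k)\<^sup>2 / c\<^sup>2) \<le> (norm (x 0 - xstar))\<^sup>2 - (norm (x (Suc N) - xstar))\<^sup>2"
    by (intro sum_le_of_decrease order_trans[OF dec] diff_left_mono)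
  moreover have "blow / c\<^sup>2 * (\<Sum>k\<in>{0..N}. (e k)\<^sup>2) = (\<Sum>k\<in>{0..N}. blow * (e k)\<^sup>2 / c\<^sup>2)"
    by (simp add: sum_distrib_left)
  ultimately have "blow / c\<^sup>2 * (\<Sum>k\<in>{0..N}. (e k)\<^sup>2) \<le> (norm (x 0 - xstar))\<^sup>2"
    using zero_le_power2[of "norm (x (Suc N) - xstar)"] by linarith
  then have "Min (e ` {0..N}) \<le> norm (x 0 - xstar) / sqrt (blow / c\<^sup>2 * (real N + 1))"
    using blow_pos c_pos e_nn by (intro Min_le_of_sum_sq_le) auto
  then show "Min ((\<lambda>k. f (x k) - fstar) ` {0..N}) \<le> c / sqrt (blow * (real N + 1)) * norm (x 0 - xstar)"
    using c_pos by (simp add: e_def real_sqrt_divide real_sqrt_mult ac_simps)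
qed

end
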